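(* Let $\mathbf{M},\bm{\Gamma}_1,\dots,\bm{\Gamma}_L$ be nonsingular $D\times D$ integer matrices that are pairwise commutative and coprime, and let $\mathbf{M}_i=\mathbf{M}\bm{\Gamma}_i$, $1\le i\le L$. Then for every unimodular $\mathbf{U}$, $\mathbf{R}=\mathbf{M}\bm{\Gamma}_1\cdots\bm{\Gamma}_L\mathbf{U}$ is an lcrm of $\mathbf{M}_1,\dots,\mathbf{M}_L$, and with $\mathbf{N}_1=\mathbf{M}\bm{\Gamma}_1$, $\mathbf{N}_i=\bm{\Gamma}_i$ ($2\le i\le L$), $\mathbf{W}_i=\mathbf{N}_1\cdots\mathbf{N}_{i-1}\mathbf{N}_{i+1}\cdots\mathbf{N}_L$, and integer matrices $\widehat{\mathbf{W}}_i$ chosen so that $\mathbf{W}_i\widehat{\mathbf{W}}_i+\mathbf{N}_i\mathbf{Q}_i=\mathbf{I}$ for some integer $\mathbf{Q}_i$ if $\mathbf{N}_i$ is not unimodular (and $\widehat{\mathbf{W}}_i=\mathbf{0}$ otherwise), every $\mathbf{m}\in\mathcal{N}(\mathbf{R})$ satisfies $\mathbf{m}=\big\langle\sum_{i=1}^L\mathbf{W}_i\widehat{\mathbf{W}}_i\langle\mathbf{m}\rangle_{\mathbf{M}_i}\big\rangle_{\mathbf{R}}$; in particular $\mathbf{m}$ is uniquely determined by its remainders modulo $\mathbf{M}_1,\dots,\mathbf{M}_L$.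
   Context: All matrices are $D\times D$ integer matrices; unimodular means integer with determinant $\pm1$. Commuting nonsingular integer matrices are coprime if all their common left (equivalently right) divisors are unimodular, where $\mathbf{A}$ is a left divisor of $\mathbf{M}$ if $\mathbf{A}^{-1}\mathbf{M}$ is integer. An lcrm of $\mathbf{M}_1,\dots,\mathbf{M}_L$ is a nonsingular integer $\mathbf{R}=\mathbf{M}_i\mathbf{P}_i$ (integer $\mathbf{P}_i$, all $i$) such that every such common right multiple equals $\mathbf{R}\mathbf{A}$ for integer $\mathbf{A}$. $\mathcal{N}(\mathbf{M})=\{\mathbf{k}\in\mathbb{Z}^D:\mathbf{k}=\mathbf{M}\mathbf{x},\ \mathbf{x}\in[0,1)^D\}$; $\langle\mathbf{m}\rangle_{\mathbf{M}}$ is the unique $\mathbf{r}\in\mathcal{N}(\mathbf{M})$ with $\mathbf{m}-\mathbf{r}\in\mathbf{M}\mathbb{Z}^D$. *)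

theory Defs
  imports "HOL-Analysis.Analysis"
begin

type_synonym 'n imat = "int ^ 'n ^ 'n"

definition nonsingular :: "'n::finite imat \<Rightarrow> bool" where
  "nonsingular A \<longleftrightarrow> det A \<noteq> 0"

definition unimodular :: "'n::finite imat \<Rightarrow> bool" where
  "unimodular U \<longleftrightarrow> det U = 1 \<or> det U = -1"

definition left_divisor :: "'n::finite imat \<Rightarrow> 'n imat \<Rightarrow> bool" where
  "left_divisor A M \<longleftrightarrow> nonsingular A \<and> (\<exists>X. M = A ** X)"

definition mat_coprime :: "'n::finite imat \<Rightarrow> 'n imat \<Rightarrow> bool" where
  "mat_coprime A B \<longleftrightarrow>
     (\<forall>C. left_divisor C A \<and> left_divisor C B \<longrightarrow> unimodular C)"

definition mat_prod_list :: "'n::finite imat list \<Rightarrow> 'n imat" where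
  "mat_prod_list Ms = foldr (\<lambda>A B. A ** B) Ms (mat 1)"

definition is_lcrm :: "(nat \<Rightarrow> 'n::finite imat) \<Rightarrow> nat \<Rightarrow> 'n imat \<Rightarrow> bool" where
  "is_lcrm Ms L R \<longleftrightarrow>
     nonsingular R \<and> (\<forall>i\<in>{1..L}. \<exists>P. R = Ms i ** P) \<and>
     (\<forall>R'. nonsingular R' \<and> (\<forall>i\<in>{1..L}. \<exists>P. R' = Ms i ** P) \<longrightarrow> (\<exists>A. R' = R ** A))"

definition real_mat :: "'n::finite imat \<Rightarrow> real ^ 'n ^ 'n" where
  "real_mat M = (\<chi> i j. real_of_int (M $ i $ j))"

definition real_vec :: "int ^ 'n \<Rightarrow> real ^ 'n" where
  "real_vec k = (\<chi> i. real_of_int (k $ i))"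

definition fund_set :: "'n::finite imat \<Rightarrow> (int ^ 'n) set" where
  "fund_set M = {k. \<exists>x::real^'n. (\<forall>i. 0 \<le> x $ i \<and> x $ i < 1) \<and> real_vec k = real_mat M *v x}"

definition mat_rem :: "int ^ 'n \<Rightarrow> 'n::finite imat \<Rightarrow> int ^ 'n" where
  "mat_rem m M = (THE r. r \<in> fund_set M \<and> (\<exists>z. m - r = M *v z))"

end

theory Submission
  imports Defs
begin

text \<open>A matrix \<open>A\<close> is studied through its lattice \<open>A \<int>\<^sup>D\<close>: \<open>B = A X\<close> for an integer \<open>X\<close> iff
  \<open>B \<int>\<^sup>D \<subseteq> A \<int>\<^sup>D\<close>, and \<open>\<langle>m\<rangle>\<^sub>A\<close> is the representative of \<open>m + A \<int>\<^sup>D\<close> in \<open>A [0,1)\<^sup>D\<close>.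
  A sublattice containing \<open>det A \<int>\<^sup>D\<close> has a nonsingular basis, so the coprimality of \<open>A\<close> and \<open>B\<close>
  yields a Bezout identity \<open>A X + B Y = I\<close>; if \<open>A\<close> and \<open>B\<close> commute, a block-matrix argument
  also yields \<open>P A + Q B = I\<close>, whence \<open>A \<int>\<^sup>D \<inter> B \<int>\<^sup>D = A B \<int>\<^sup>D\<close>.
  Merging \<open>M\<close> into \<open>\<Gamma>\<^sub>1\<close> gives the pairwise commuting and coprime family
  \<open>N\<^sub>1 = M \<Gamma>\<^sub>1, N\<^sub>2 = \<Gamma>\<^sub>2, \<dots>\<close>, so that \<open>R \<int>\<^sup>D = \<Inter>\<^sub>i N\<^sub>i \<int>\<^sup>D \<supseteq> \<Inter>\<^sub>i M\<^sub>i \<int>\<^sup>D\<close>: this makes \<open>R\<close> an lcrm,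
  and the combination \<open>\<Sum>\<^sub>i W\<^sub>i What\<^sub>i \<langle>m\<rangle>\<^sub>M\<^sub>i\<close> is congruent to \<open>m\<close> modulo every \<open>N\<^sub>i\<close>,
  because \<open>W\<^sub>i What\<^sub>i \<equiv> I\<close> modulo \<open>N\<^sub>i\<close> while \<open>W\<^sub>j \<equiv> 0\<close> modulo \<open>N\<^sub>i\<close> for \<open>j \<noteq> i\<close>.\<close>

section \<open>Integer matrices and the adjugate\<close>

lemma real_mat_mult: "real_mat (A ** B) = real_mat A ** real_mat B"
  by (simp add: real_mat_def matrix_matrix_mult_def vec_eq_iff of_int_sum)

lemma real_vec_mult: "real_vec (A *v x) = real_mat A *v real_vec x"
  by (simp add: real_mat_def real_vec_def matrix_vector_mult_def vec_eq_iff of_int_sum)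

lemma real_vec_diff: "real_vec (x - y) = real_vec x - real_vec y"
  by (simp add: real_vec_def vec_eq_iff)

lemma real_mat_inject: "real_mat A = real_mat B \<longleftrightarrow> A = B"
  by (simp add: real_mat_def vec_eq_iff)

lemma real_vec_inject: "real_vec x = real_vec y \<longleftrightarrow> x = y"
  by (simp add: real_vec_def vec_eq_iff)

lemma det_real_mat: "det (real_mat A) = real_of_int (det A)"
  by (simp add: det_def real_mat_def of_int_sum)

lemma invertible_real_mat: "nonsingular A \<Longrightarrow> invertible (real_mat A)"
  by (simp add: invertible_det_nz det_real_mat nonsingular_def)

lemma nonsingular_mult_left_cancel:
  fixes A X Y :: "'n::finite imat"
  assumes "nonsingular A" and "A ** X = A ** Y"
  shows "X = Y"
proof -
  obtain B where B: "B ** real_mat A = mat 1"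
    using invertible_real_mat[OF assms(1)] invertible_def by blast
  have "B ** (real_mat A ** real_mat X) = B ** (real_mat A ** real_mat Y)"
    using assms(2) by (simp add: real_mat_mult[symmetric])
  then have "real_mat X = real_mat Y"
    by (simp add: matrix_mul_assoc B)
  then show ?thesis by (simp add: real_mat_inject)
qed

lemma unimodular_imp_nonsingular: "unimodular U \<Longrightarrow> nonsingular U"
  by (auto simp: unimodular_def nonsingular_def)

lemma unimodular_if_right_inverse:
  fixes X :: "'n::finite imat"
  assumes "X ** Y = mat 1"
  shows "unimodular X"
proof -
  have "det X * det Y = 1" by (metis assms det_mul det_I)
  then show ?thesis by (auto simp: unimodular_def zmult_eq_1_iff)
qed

lemma scalar_mat_commute: "mat c ** X = X ** (mat c :: 'n::finite imat)"
  unfolding matrix_matrix_mult_def mat_def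
  by (auto simp: vec_eq_iff if_distrib if_distribR mult.commute cong: if_cong)

lemma scalar_mat_mult_vec: "(mat c :: 'n::finite imat) *v x = c *s x"
  by (simp add: mat_def matrix_vector_mult_def vec_eq_iff if_distrib if_distribR cong: if_cong)

lemma vector_scalar_commute_ring: "(A::'a::comm_semiring_1^'n^'m) *v (c *s x) = c *s (A *v x)"
  by (simp add: vector_scalar_mult_def matrix_vector_mult_def mult_ac sum_distrib_left)

definition adjugate :: "'n::finite imat \<Rightarrow> 'n imat" where
  "adjugate A = (\<chi> k i. det (\<chi> r c. if c = k then (if r = i then 1 else 0) else A $ r $ c))"

text \<open>Cramer's rule over the reals, applied to the right-hand side \<open>axis i 1\<close>.\<close>
lemma mult_adjugate_column:
  fixes A :: "'n::finite imat"
  assumes "nonsingular A"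
  shows "A *v column i (adjugate A) = det A *s axis i 1"
proof -
  let ?b = "real_vec (axis i 1 :: int ^ 'n)"
  let ?x = "\<chi> k. det (\<chi> r j. if j = k then ?b $ r else real_mat A $ r $ j) / det (real_mat A)"
  have "real_mat A *v ?x = ?b"
    using cramer[of "real_mat A" ?x ?b] assms by (simp add: det_real_mat nonsingular_def)
  moreover have "?x = (1 / real_of_int (det A)) *s real_vec (column i (adjugate A))"
    (is "_ = _ *s ?c")
  proof -
    have "(\<chi> r j. if j = k then ?b $ r else real_mat A $ r $ j) =
        real_mat (\<chi> r c. if c = k then (if r = i then 1 else 0) else A $ r $ c)" for k
      by (simp add: real_mat_def real_vec_def vec_eq_iff axis_def)
    then show ?thesis
      by (simp add: det_real_mat adjugate_def vec_eq_iff real_vec_def column_def)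
  qed
  ultimately have "(1 / real_of_int (det A)) *s (real_mat A *v ?c) = ?b"
    by (simp add: vector_scalar_commute_ring)
  then have "real_mat A *v ?c = real_of_int (det A) *s ?b"
    using assms by (auto simp: nonsingular_def vec_eq_iff field_simps)
  moreover have "real_vec (det A *s axis i 1) = real_of_int (det A) *s ?b"
    by (simp add: real_vec_def vec_eq_iff)
  ultimately have "real_vec (A *v column i (adjugate A)) = real_vec (det A *s axis i 1)"
    by (simp only: real_vec_mult)
  then show ?thesis by (simp only: real_vec_inject)
qed

lemma mult_adjugate_right:
  fixes A :: "'n::finite imat"
  assumes "nonsingular A"
  shows "A ** adjugate A = mat (det A)"
proof -
  have "(A ** adjugate A) $ r $ i = (A *v column i (adjugate A)) $ r" for r i
    by (simp add: matrix_matrix_mult_def matrix_vector_mult_def column_def)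
  then show ?thesis
    using mult_adjugate_column[OF assms] by (simp add: vec_eq_iff mat_def axis_def)
qed

lemma mult_adjugate_left:
  fixes A :: "'n::finite imat"
  assumes "nonsingular A"
  shows "adjugate A ** A = mat (det A)"
proof (rule nonsingular_mult_left_cancel[OF assms])
  have "A ** (adjugate A ** A) = mat (det A) ** A"
    by (simp add: matrix_mul_assoc mult_adjugate_right[OF assms])
  then show "A ** (adjugate A ** A) = A ** mat (det A)"
    by (simp add: scalar_mat_commute)
qed

lemma adjugate_commute:
  fixes A B :: "'n::finite imat"
  assumes "nonsingular B" and "A ** B = B ** A"
  shows "A ** adjugate B = adjugate B ** A"
proof (rule nonsingular_mult_left_cancel[OF assms(1)])
  have "B ** (A ** adjugate B) = A ** mat (det B)"
    by (simp add: matrix_mul_assoc assms(2)[symmetric])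
      (simp add: matrix_mul_assoc[symmetric] mult_adjugate_right[OF assms(1)])
  also have "\<dots> = B ** (adjugate B ** A)"
    by (simp add: matrix_mul_assoc mult_adjugate_right[OF assms(1)] scalar_mat_commute)
  finally show "B ** (A ** adjugate B) = B ** (adjugate B ** A)" .
qed

lemma scalar_mat_mult: "mat a ** (mat b :: 'n::finite imat) = mat (a * b)"
  by (simp add: matrix_eq matrix_vector_mul_assoc[symmetric] scalar_mat_mult_vec)

lemma unimodular_inverse:
  fixes U :: "'n::finite imat"
  assumes "unimodular U"
  obtains V where "U ** V = mat 1" and "V ** U = mat 1"
proof
  have d: "nonsingular U" "det U * det U = 1"
    using assms by (auto simp: unimodular_def nonsingular_def)
  have "U ** (mat (det U) ** adjugate U) = (U ** adjugate U) ** mat (det U)"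
    by (metis matrix_mul_assoc scalar_mat_commute)
  then show "U ** (mat (det U) ** adjugate U) = mat 1"
    by (simp add: mult_adjugate_right[OF d(1)] scalar_mat_mult d(2))
  show "(mat (det U) ** adjugate U) ** U = mat 1"
    by (simp add: matrix_mul_assoc[symmetric] mult_adjugate_left[OF d(1)] scalar_mat_mult d(2))
qed

section \<open>Lattices and remainders\<close>

definition mat_of_cols :: "('n::finite \<Rightarrow> int ^ 'n) \<Rightarrow> 'n imat" where
  "mat_of_cols u = (\<chi> r k. u k $ r)"

lemma mult_mat_of_cols: "A ** mat_of_cols u = mat_of_cols (\<lambda>k. A *v u k)"
  by (simp add: mat_of_cols_def matrix_matrix_mult_def matrix_vector_mult_def)

lemma mat_of_cols_add: "mat_of_cols u + mat_of_cols v = mat_of_cols (\<lambda>k. u k + v k)"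
  by (simp add: mat_of_cols_def vec_eq_iff)

lemma mat_of_cols_axis: "mat_of_cols (\<lambda>k. A *v axis k 1) = A"
  by (simp add: mat_of_cols_def matrix_vector_mult_def axis_def vec_eq_iff if_distrib
      if_distribR cong: if_cong)

definition mat_lattice :: "'n::finite imat \<Rightarrow> (int ^ 'n) set" where
  "mat_lattice A = range (\<lambda>x. A *v x)"

lemma mat_lattice_iff: "v \<in> mat_lattice A \<longleftrightarrow> (\<exists>x. v = A *v x)"
  by (auto simp: mat_lattice_def)

lemma mult_vec_in_mat_lattice [simp]: "A *v x \<in> mat_lattice A"
  by (simp add: mat_lattice_def)

lemma mat_lattice_add: "v \<in> mat_lattice A \<Longrightarrow> w \<in> mat_lattice A \<Longrightarrow> v + w \<in> mat_lattice A"
  unfolding mat_lattice_iff by (metis matrix_vector_right_distrib)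

lemma mat_lattice_diff: "v \<in> mat_lattice A \<Longrightarrow> w \<in> mat_lattice A \<Longrightarrow> v - w \<in> mat_lattice A"
  unfolding mat_lattice_iff by (metis matrix_vector_mult_diff_distrib)

lemma mat_lattice_zero: "0 \<in> mat_lattice A"
  using mult_vec_in_mat_lattice[of A 0] by simp

lemma mat_lattice_sum: "(\<And>i. i \<in> I \<Longrightarrow> f i \<in> mat_lattice A) \<Longrightarrow> sum f I \<in> mat_lattice A"
  by (induction I rule: infinite_finite_induct) (simp_all add: mat_lattice_zero mat_lattice_add)

lemma mat_lattice_subset_iff: "mat_lattice B \<subseteq> mat_lattice A \<longleftrightarrow> (\<exists>X. B = A ** X)"
proof
  assume "mat_lattice B \<subseteq> mat_lattice A"
  then have "B *v axis k 1 \<in> mat_lattice A" for k by auto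
  then have "\<forall>k. \<exists>u. B *v axis k 1 = A *v u" by (simp add: mat_lattice_iff)
  then obtain u where u: "\<And>k. B *v axis k 1 = A *v u k" by metis
  have "B = mat_of_cols (\<lambda>k. B *v axis k 1)" by (simp only: mat_of_cols_axis)
  also have "\<dots> = A ** mat_of_cols u" by (simp only: u mult_mat_of_cols)
  finally show "\<exists>X. B = A ** X" ..
next
  assume "\<exists>X. B = A ** X"
  then show "mat_lattice B \<subseteq> mat_lattice A"
    by (auto simp: mat_lattice_iff matrix_vector_mul_assoc[symmetric])
qed

lemma mat_lattice_mult_subset: "mat_lattice (A ** B) \<subseteq> mat_lattice A"
  unfolding mat_lattice_subset_iff by blast

lemma mat_lattice_unimodular:
  assumes "unimodular U"
  shows "mat_lattice U = UNIV"
proof -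
  obtain V where "U ** V = mat 1" using unimodular_inverse[OF assms] by blast
  then have "v = U *v (V *v v)" for v by (simp add: matrix_vector_mul_assoc)
  then have "v \<in> mat_lattice U" for v by (metis mult_vec_in_mat_lattice)
  then show ?thesis by blast
qed

lemma mat_lattice_mult_unimodular:
  assumes "unimodular U"
  shows "mat_lattice (A ** U) = mat_lattice A"
proof -
  have U: "range (\<lambda>x. U *v x) = UNIV"
    using mat_lattice_unimodular[OF assms] by (simp add: mat_lattice_def)
  have "mat_lattice (A ** U) = (\<lambda>x. A *v x) ` range (\<lambda>x. U *v x)"
    by (simp add: mat_lattice_def image_image matrix_vector_mul_assoc)
  then show ?thesis by (simp add: U mat_lattice_def)
qed

lemma fund_set_unique:
  fixes R :: "'n::finite imat"
  assumes "nonsingular R" and "r \<in> fund_set R" and "r' \<in> fund_set R"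
    and "r - r' \<in> mat_lattice R"
  shows "r = r'"
proof -
  obtain B where B: "B ** real_mat R = mat 1"
    using invertible_real_mat[OF assms(1)] invertible_def by blast
  obtain x where x: "\<forall>i. 0 \<le> x $ i \<and> x $ i < 1" "real_vec r = real_mat R *v x"
    using assms(2) unfolding fund_set_def by blast
  obtain x' where x': "\<forall>i. 0 \<le> x' $ i \<and> x' $ i < 1" "real_vec r' = real_mat R *v x'"
    using assms(3) unfolding fund_set_def by blast
  obtain z where z: "r - r' = R *v z" using assms(4) by (auto simp: mat_lattice_iff)
  have "real_mat R *v (x - x') = real_mat R *v real_vec z"
    using arg_cong[OF z, of real_vec] x(2) x'(2)
    by (simp add: real_vec_diff real_vec_mult matrix_vector_mult_diff_distrib)
  then have "B *v (real_mat R *v (x - x')) = B *v (real_mat R *v real_vec z)" by simp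
  then have xz: "x - x' = real_vec z" by (simp add: matrix_vector_mul_assoc B)
  have "z = 0"
    unfolding vec_eq_iff zero_index
  proof
    fix i
    have "real_of_int (z $ i) = x $ i - x' $ i" using xz by (simp add: vec_eq_iff real_vec_def)
    then have "-1 < real_of_int (z $ i)" "real_of_int (z $ i) < 1"
      using x(1)[rule_format, of i] x'(1)[rule_format, of i] by linarith+
    then show "z $ i = 0" by linarith
  qed
  then show ?thesis using z by simp
qed

text \<open>The representative is \<open>m - R \<lfloor>R\<^sup>-\<^sup>1 m\<rfloor>\<close>.\<close>
lemma ex_fund_set_representative:
  fixes R :: "'n::finite imat"
  assumes "nonsingular R"
  shows "\<exists>r\<in>fund_set R. m - r \<in> mat_lattice R"
proof -
  obtain B where B: "real_mat R ** B = mat 1"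
    using invertible_real_mat[OF assms] invertible_def by blast
  define y where "y = B *v real_vec m"
  define z :: "int ^ 'n" where "z = (\<chi> i. \<lfloor>y $ i\<rfloor>)"
  have "real_vec (m - R *v z) = real_mat R *v (y - real_vec z)"
    by (simp add: y_def real_vec_diff real_vec_mult matrix_vector_mult_diff_distrib
        matrix_vector_mul_assoc B)
  moreover have "\<forall>i. 0 \<le> (y - real_vec z) $ i \<and> (y - real_vec z) $ i < 1"
    by (simp add: z_def real_vec_def) linarith
  ultimately have "m - R *v z \<in> fund_set R" unfolding fund_set_def by blast
  then show ?thesis by force
qed

lemma mat_rem_eqI:
  fixes R :: "'n::finite imat"
  assumes "nonsingular R" and "r \<in> fund_set R" and "m - r \<in> mat_lattice R"
  shows "mat_rem m R = r"
  unfolding mat_rem_def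
proof (rule the_equality)
  show "r \<in> fund_set R \<and> (\<exists>z. m - r = R *v z)"
    using assms(2,3) by (simp add: mat_lattice_iff)
next
  fix r' assume r': "r' \<in> fund_set R \<and> (\<exists>z. m - r' = R *v z)"
  have "r' - r = (m - r) - (m - r')" by simp
  then have "r' - r \<in> mat_lattice R"
    using r' assms(3) by (metis mat_lattice_diff mat_lattice_iff)
  then show "r' = r" using fund_set_unique[OF assms(1)] r' assms(2) by blast
qed

lemma mat_rem_spec:
  fixes R :: "'n::finite imat"
  assumes "nonsingular R"
  shows "mat_rem m R \<in> fund_set R" and "m - mat_rem m R \<in> mat_lattice R"
  using ex_fund_set_representative[OF assms, of m] mat_rem_eqI[OF assms] by auto

section \<open>Bases of sublattices and the Bezout identity\<close>

lemma int_subgroup_principal: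
  fixes K :: "int set"
  assumes closed: "\<And>a b c. a \<in> K \<Longrightarrow> b \<in> K \<Longrightarrow> a + c * b \<in> K" and "k0 \<in> K"
  shows "\<exists>g\<in>K. \<forall>k\<in>K. g dvd k"
proof (cases "K \<subseteq> {0}")
  case True
  then show ?thesis using \<open>k0 \<in> K\<close> by auto
next
  case False
  then obtain k1 where k1: "k1 \<in> K" "k1 \<noteq> 0" by auto
  have "\<bar>k1\<bar> = k1 + (sgn k1 - 1) * k1" using k1(2) by (cases "k1 > 0") auto
  then have "\<bar>k1\<bar> \<in> K" using closed[OF k1(1) k1(1)] by simp
  then have ex: "\<exists>n::nat. 0 < n \<and> int n \<in> K" using k1(2) by (intro exI[of _ "nat \<bar>k1\<bar>"]) simp
  define n where "n = (LEAST n::nat. 0 < n \<and> int n \<in> K)"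
  have n: "0 < n" "int n \<in> K" using LeastI_ex[OF ex] by (simp_all add: n_def)
  have "int n dvd k" if "k \<in> K" for k
  proof -
    have "k + (- (k div int n)) * int n = k mod int n" by (simp add: minus_div_mult_eq_mod)
    then have "k mod int n \<in> K" using closed[OF that n(2)] by metis
    moreover have "0 \<le> k mod int n" "k mod int n < int n" using n(1) by simp_all
    ultimately have "k mod int n = 0"
      using Least_le[of "\<lambda>n. 0 < n \<and> int n \<in> K" "nat (k mod int n)"]
      by (fastforce simp: n_def[symmetric])
    then show ?thesis by (simp add: dvd_eq_mod_eq_0)
  qed
  then show ?thesis using n(2) by blast
qed

locale int_sublattice =
  fixes G :: "(int ^ 'n::finite) set"
  assumes zero_mem: "0 \<in> G"
    and add_scaled_mem: "x \<in> G \<Longrightarrow> y \<in> G \<Longrightarrow> x + c *s y \<in> G"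
begin

lemma scaled_mem: "y \<in> G \<Longrightarrow> c *s y \<in> G"
  using add_scaled_mem[OF zero_mem] by simp

lemma sum_mem: "(\<And>j. j \<in> J \<Longrightarrow> f j \<in> G) \<Longrightarrow> sum f J \<in> G"
  by (induction J rule: infinite_finite_induct)
    (simp_all add: zero_mem add_scaled_mem[where c = 1, simplified])

text \<open>Induction on the support: a vector in \<open>G\<close> whose \<open>i\<close>-th coordinate is a generator of the
  \<open>i\<close>-th coordinates of all members of \<open>G\<close> supported on \<open>insert i J\<close> extends a spanning family for
  the members supported on \<open>J\<close>.\<close>
lemma ex_spanning_family:
  assumes "finite J"
  shows "\<exists>b. (\<forall>j\<in>J. b j \<in> G) \<and>
    (\<forall>x\<in>G. (\<forall>k. k \<notin> J \<longrightarrow> x $ k = 0) \<longrightarrow> (\<exists>c. x = (\<Sum>j\<in>J. c j *s b j)))"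
  using assms
proof (induction J rule: finite_induct)
  case empty
  have "x = 0" if "\<forall>k. x $ k = 0" for x :: "int ^ 'n" using that by (simp add: vec_eq_iff)
  then show ?case by auto
next
  case (insert i J)
  obtain b where b: "\<forall>j\<in>J. b j \<in> G"
    and span: "\<forall>x\<in>G. (\<forall>k. k \<notin> J \<longrightarrow> x $ k = 0) \<longrightarrow> (\<exists>c. x = (\<Sum>j\<in>J. c j *s b j))"
    using insert.IH by blast
  define S where "S = {x \<in> G. \<forall>k. k \<notin> insert i J \<longrightarrow> x $ k = 0}"
  have S_closed: "x + c *s y \<in> S" if "x \<in> S" "y \<in> S" for x y c
    using that add_scaled_mem by (simp add: S_def)
  have "\<exists>g\<in>(\<lambda>x. x $ i) ` S. \<forall>k\<in>(\<lambda>x. x $ i) ` S. g dvd k"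
  proof (rule int_subgroup_principal)
    show "0 \<in> (\<lambda>x. x $ i) ` S" using zero_mem by (force simp: S_def)
    fix a b c assume "a \<in> (\<lambda>x. x $ i) ` S" "b \<in> (\<lambda>x. x $ i) ` S"
    then obtain x y where "x \<in> S" "y \<in> S" "a = x $ i" "b = y $ i" by blast
    then show "a + c * b \<in> (\<lambda>x. x $ i) ` S" using S_closed by force
  qed
  then obtain x0 where x0: "x0 \<in> S" and gen: "\<And>x. x \<in> S \<Longrightarrow> x0 $ i dvd x $ i" by blast
  have "\<exists>c. x = (\<Sum>j\<in>insert i J. c j *s (b(i := x0)) j)"
    if "x \<in> G" "\<forall>k. k \<notin> insert i J \<longrightarrow> x $ k = 0" for x
  proof -
    have "x \<in> S" using that by (simp add: S_def)
    then obtain t where t: "x $ i = x0 $ i * t" using gen by (meson dvdE)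
    have "x + (- t) *s x0 \<in> S" using S_closed[OF \<open>x \<in> S\<close> x0] .
    moreover have "(x + (- t) *s x0) $ i = 0" using t by simp
    ultimately obtain c where c: "x + (- t) *s x0 = (\<Sum>j\<in>J. c j *s b j)"
      using span by (force simp: S_def)
    have "(\<Sum>j\<in>insert i J. (c(i := t)) j *s (b(i := x0)) j) = t *s x0 + (\<Sum>j\<in>J. c j *s b j)"
      using insert.hyps by (auto intro!: sum.cong)
    also have "\<dots> = x" by (simp add: c[symmetric] vec_eq_iff algebra_simps)
    finally show ?thesis by metis
  qed
  moreover have "\<forall>j\<in>insert i J. (b(i := x0)) j \<in> G" using b x0 by (simp add: S_def)
  ultimately show ?case by blast
qed

theorem ex_basis:
  assumes "\<And>i. \<alpha> *s axis i 1 \<in> G" and "\<alpha> \<noteq> 0"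
  obtains C where "nonsingular C" and "G = mat_lattice C"
proof -
  obtain b :: "'n \<Rightarrow> int ^ 'n"
    where b: "\<forall>j. b j \<in> G" and span: "\<forall>x\<in>G. \<exists>c. x = (\<Sum>j\<in>UNIV. c j *s b j)"
    using ex_spanning_family[of UNIV] by auto
  have C: "mat_of_cols b *v y = (\<Sum>j\<in>UNIV. y $ j *s b j)" for y
    by (simp add: matrix_mult_sum mat_of_cols_def column_def)
  have G: "G = mat_lattice (mat_of_cols b)"
  proof (intro set_eqI iffI)
    fix x assume "x \<in> G"
    then obtain c where "x = (\<Sum>j\<in>UNIV. c j *s b j)" using span by blast
    then have "x = mat_of_cols b *v (\<chi> j. c j)" by (simp add: C)
    then show "x \<in> mat_lattice (mat_of_cols b)" by simp
  next
    fix x assume "x \<in> mat_lattice (mat_of_cols b)"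
    then show "x \<in> G" using b by (auto simp: mat_lattice_iff C intro!: sum_mem scaled_mem)
  qed
  then have "\<forall>i. \<exists>v. \<alpha> *s axis i 1 = mat_of_cols b *v v"
    using assms(1) mat_lattice_iff by blast
  then obtain u where u: "\<And>i. \<alpha> *s axis i 1 = mat_of_cols b *v u i"
    by (metis choice)
  have "mat_of_cols b ** mat_of_cols u = mat \<alpha>"
    by (simp add: mult_mat_of_cols u[symmetric])
      (simp add: mat_of_cols_def mat_def axis_def vec_eq_iff)
  moreover have "det (mat \<alpha> :: 'n imat) = \<alpha> ^ CARD('n)"
    by (simp add: det_diagonal mat_def)
  ultimately have "det (mat_of_cols b) * det (mat_of_cols u) = \<alpha> ^ CARD('n)"
    by (metis det_mul)
  then have "nonsingular (mat_of_cols b)" using assms(2) by (auto simp: nonsingular_def)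
  with G show ?thesis using that by blast
qed

end

text \<open>The lattice \<open>A \<int>\<^sup>D + B \<int>\<^sup>D\<close> contains \<open>det A \<int>\<^sup>D\<close>; a basis of it is a common left divisor
  of \<open>A\<close> and \<open>B\<close>, hence unimodular, so the lattice is all of \<open>\<int>\<^sup>D\<close>.\<close>
lemma bezout_if_mat_coprime:
  fixes A B :: "'n::finite imat"
  assumes "nonsingular A" and "mat_coprime A B"
  shows "\<exists>X Y. A ** X + B ** Y = mat 1"
proof -
  define G where "G = {A *v x + B *v y | x y. True}"
  interpret int_sublattice G
  proof
    have "0 = A *v 0 + B *v 0" by simp
    then show "0 \<in> G" unfolding G_def by blast
    fix v w c assume "v \<in> G" "w \<in> G"
    then obtain x y x' y' where "v = A *v x + B *v y" "w = A *v x' + B *v y'"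
      unfolding G_def by blast
    then have "v + c *s w = A *v (x + c *s x') + B *v (y + c *s y')"
      by (simp add: matrix_vector_right_distrib vector_scalar_commute_ring algebra_simps)
    then show "v + c *s w \<in> G" unfolding G_def by blast
  qed
  have "det A *s axis i 1 = A *v column i (adjugate A) + B *v 0" for i
    by (simp add: mult_adjugate_column[OF assms(1)])
  then have "det A *s axis i 1 \<in> G" for i unfolding G_def by blast
  then obtain C where C: "nonsingular C" "G = mat_lattice C"
    using ex_basis assms(1) nonsingular_def by blast
  have "A *v x = A *v x + B *v 0" "B *v x = A *v 0 + B *v x" for x by simp_all
  then have "mat_lattice A \<subseteq> G" "mat_lattice B \<subseteq> G"
    unfolding G_def mat_lattice_def by blast+
  then have "unimodular C"
    using assms(2) C unfolding mat_coprime_def left_divisor_def mat_lattice_subset_iff[symmetric]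
    by blast
  then have "axis k 1 \<in> G" for k using C(2) by (simp add: mat_lattice_unimodular)
  then have "\<forall>k. \<exists>x y. axis k 1 = A *v x + B *v y" unfolding G_def by blast
  then obtain x y where xy: "\<And>k. axis k 1 = A *v x k + B *v y k" by metis
  have "A ** mat_of_cols x + B ** mat_of_cols y = mat_of_cols (\<lambda>k. mat 1 *v axis k 1)"
    by (simp add: mult_mat_of_cols mat_of_cols_add xy[symmetric])
  then show ?thesis unfolding mat_of_cols_axis by blast
qed

section \<open>Block matrices and the left Bezout identity\<close>

definition block_mat :: "'n::finite imat \<Rightarrow> 'n imat \<Rightarrow> 'n imat \<Rightarrow> 'n imat \<Rightarrow> ('n + 'n) imat" where
  "block_mat P Q R S = (\<chi> i j. case (i, j) of
     (Inl a, Inl b) \<Rightarrow> P $ a $ b | (Inl a, Inr b) \<Rightarrow> Q $ a $ b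
   | (Inr a, Inl b) \<Rightarrow> R $ a $ b | (Inr a, Inr b) \<Rightarrow> S $ a $ b)"

lemma block_mat_nth [simp]:
  "block_mat P Q R S $ Inl a $ Inl b = P $ a $ b" "block_mat P Q R S $ Inl a $ Inr b = Q $ a $ b"
  "block_mat P Q R S $ Inr a $ Inl b = R $ a $ b" "block_mat P Q R S $ Inr a $ Inr b = S $ a $ b"
  by (simp_all add: block_mat_def)

lemma block_mat_eq_iff:
  "M = block_mat P Q R S \<longleftrightarrow>
    (\<forall>a b. M $ Inl a $ Inl b = P $ a $ b \<and> M $ Inl a $ Inr b = Q $ a $ b \<and>
           M $ Inr a $ Inl b = R $ a $ b \<and> M $ Inr a $ Inr b = S $ a $ b)"
proof
  assume "\<forall>a b. M $ Inl a $ Inl b = P $ a $ b \<and> M $ Inl a $ Inr b = Q $ a $ b \<and>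
           M $ Inr a $ Inl b = R $ a $ b \<and> M $ Inr a $ Inr b = S $ a $ b"
  then have "M $ i $ j = block_mat P Q R S $ i $ j" for i j by (cases i; cases j) simp_all
  then show "M = block_mat P Q R S" by (simp add: vec_eq_iff)
qed simp

lemma block_mat_inject:
  "block_mat P Q R S = block_mat P' Q' R' S' \<longleftrightarrow> P = P' \<and> Q = Q' \<and> R = R' \<and> S = S'"
  unfolding block_mat_eq_iff by (auto simp: vec_eq_iff)

lemma block_mat_decompose:
  obtains P Q R S where "M = block_mat P Q R S"
  using block_mat_eq_iff[of M "\<chi> a b. M $ Inl a $ Inl b" "\<chi> a b. M $ Inl a $ Inr b"
      "\<chi> a b. M $ Inr a $ Inl b" "\<chi> a b. M $ Inr a $ Inr b"] by auto

lemma block_mat_one: "mat 1 = block_mat (mat 1) 0 0 (mat 1)"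
  unfolding block_mat_eq_iff by (simp add: mat_def)

lemma block_mat_mult:
  "block_mat P Q R S ** block_mat P' Q' R' S' =
     block_mat (P ** P' + Q ** R') (P ** Q' + Q ** S') (R ** P' + S ** R') (R ** Q' + S ** S')"
proof -
  have "sum f UNIV = sum (f \<circ> Inl) UNIV + sum (f \<circ> Inr) UNIV" for f :: "'a + 'a \<Rightarrow> int"
    using sum.Plus[of UNIV UNIV f] by simp
  then show ?thesis by (simp add: block_mat_eq_iff matrix_matrix_mult_def)
qed

lemma det_conj_permutation:
  fixes M :: "'a::comm_ring_1 ^ 'n::finite ^ 'n"
  assumes "p permutes UNIV"
  shows "det (\<chi> i j. M $ p i $ p j) = det M"
proof -
  have "det (\<chi> i j. M $ p i $ p j) = det (\<chi> i. (\<chi> i j. M $ i $ p j) $ p i)" by simp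
  also have "\<dots> = of_int (sign p) * det (\<chi> i j. M $ i $ p j)"
    by (rule det_permute_rows[OF assms])
  also have "\<dots> = of_int (sign p) * (of_int (sign p) * det M)"
    by (simp add: det_permute_columns[OF assms])
  finally show ?thesis by (simp add: mult.assoc[symmetric] of_int_mult[symmetric])
qed

lemma det_block_mat_swap:
  "det (block_mat A 0 0 (mat 1)) = det (block_mat (mat 1) 0 0 A)"
proof -
  have "case_sum Inr Inl permutes (UNIV :: ('a + 'a) set)"
    by (rule bij_imp_permutes)
      (auto intro!: bij_betwI[of _ _ _ "case_sum Inr Inl"] split: sum.split)
  moreover have "(\<chi> i j. block_mat A 0 0 (mat 1) $ case_sum Inr Inl i $ case_sum Inr Inl j) =
      block_mat (mat 1) 0 0 A"
    by (simp add: block_mat_eq_iff)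
  ultimately show ?thesis by (metis det_conj_permutation)
qed

lemma nonsingular_block_mat_diag:
  fixes A :: "'n::finite imat"
  assumes "nonsingular A"
  shows "nonsingular (block_mat A 0 0 (mat 1))"
proof -
  let ?D = "block_mat (mat (det A)) 0 0 (mat 1) :: ('n + 'n) imat"
  have "block_mat A 0 0 (mat 1) ** block_mat (adjugate A) 0 0 (mat 1) = ?D"
    by (simp add: block_mat_mult mult_adjugate_right[OF assms])
  moreover have "det ?D \<noteq> 0"
  proof -
    have "?D $ i $ j = 0" if "i \<noteq> j" for i j
      using that by (cases i; cases j) (simp_all add: mat_def)
    moreover have "?D $ i $ i \<noteq> 0" for i
      using assms by (cases i) (simp_all add: mat_def nonsingular_def)
    ultimately show ?thesis by (simp add: det_diagonal)
  qed
  ultimately show ?thesis by (metis det_mul mult_eq_0_iff nonsingular_def)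
qed

lemma unimodular_block_mat_unitriangular:
  "unimodular (block_mat (mat 1) B 0 (mat 1))" "unimodular (block_mat (mat 1) 0 B (mat 1))"
  by (rule unimodular_if_right_inverse[where Y = "block_mat (mat 1) (- B) 0 (mat 1)"],
      simp add: block_mat_mult block_mat_one[symmetric])
    (rule unimodular_if_right_inverse[where Y = "block_mat (mat 1) 0 (- B) (mat 1)"],
      simp add: block_mat_mult block_mat_one[symmetric])

lemma mat_mult_uminus_right: "(A :: 'n::finite imat) ** (- B) = - (A ** B)"
  by (simp add: matrix_matrix_mult_def vec_eq_iff sum_negf)

lemma mat_mult_uminus_left: "(- A :: 'n::finite imat) ** B = - (A ** B)"
  by (simp add: matrix_matrix_mult_def vec_eq_iff sum_negf)

text \<open>For commuting \<open>A\<close>, \<open>B\<close> a right Bezout identity \<open>A X + B Y = I\<close> makes the block matrix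
  \<open>N = [X, -B; Y, A]\<close> unimodular, since \<open>[A, B; 0, I] N = [I, 0; Y, A]\<close>; the bottom row of
  \<open>N\<^sup>-\<^sup>1\<close> then yields a left Bezout identity.\<close>
lemma left_bezout_if_right_bezout:
  fixes A B X Y :: "'n::finite imat"
  assumes "nonsingular A" and "A ** B = B ** A" and "A ** X + B ** Y = mat 1"
  obtains P Q where "P ** A + Q ** B = mat 1"
proof -
  let ?N = "block_mat X (- B) Y A"
  have "block_mat (mat 1) B 0 (mat 1) ** block_mat A 0 0 (mat 1) ** ?N =
      block_mat (mat 1) 0 Y (mat 1) ** block_mat (mat 1) 0 0 A"
    using assms(2,3) by (simp add: block_mat_mult mat_mult_uminus_right)
  then have "det (block_mat (mat 1) B 0 (mat 1)) * det (block_mat A 0 0 (mat 1)) * det ?N =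
      det (block_mat (mat 1) 0 Y (mat 1)) * det (block_mat A 0 0 (mat 1))"
    by (metis det_mul det_block_mat_swap)
  then have "det (block_mat (mat 1) B 0 (mat 1)) * det ?N = det (block_mat (mat 1) 0 Y (mat 1))"
    using nonsingular_block_mat_diag[OF assms(1)] by (simp add: nonsingular_def)
  then have "unimodular ?N"
    using unimodular_block_mat_unitriangular(1)[of B] unimodular_block_mat_unitriangular(2)[of Y]
    by (auto simp: unimodular_def)
  then obtain Ni where "Ni ** ?N = mat 1" using unimodular_inverse by blast
  moreover obtain P1 P2 Q1 Q2 where "Ni = block_mat P1 P2 Q1 Q2" using block_mat_decompose by blast
  ultimately have "Q1 ** (- B) + Q2 ** A = mat 1"
    by (simp add: block_mat_mult block_mat_one block_mat_inject)
  then have "Q2 ** A + (- Q1) ** B = mat 1"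
    by (simp add: mat_mult_uminus_right mat_mult_uminus_left add.commute)
  then show ?thesis using that by blast
qed

section \<open>Commuting coprime families\<close>

definition comm_bezout :: "'n::finite imat \<Rightarrow> 'n imat \<Rightarrow> bool" where
  "comm_bezout A B \<longleftrightarrow> A ** B = B ** A \<and> (\<exists>X Y. A ** X + B ** Y = mat 1)"

lemma comm_bezout_sym: "comm_bezout A B \<Longrightarrow> comm_bezout B A"
  unfolding comm_bezout_def by (metis add.commute)

lemma comm_bezout_if_mat_coprime:
  "nonsingular A \<Longrightarrow> A ** B = B ** A \<Longrightarrow> mat_coprime A B \<Longrightarrow> comm_bezout A B"
  by (simp add: comm_bezout_def bezout_if_mat_coprime)

lemma comm_bezout_mat_one: "comm_bezout A (mat 1)"
  unfolding comm_bezout_def by (metis matrix_mul_lid matrix_mul_rid add_0 times0_right)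

lemma matrix_add_rdistrib: "((A :: 'n::finite imat) + B) ** C = A ** C + B ** C"
  by (simp add: matrix_matrix_mult_def vec_eq_iff sum.distrib distrib_right)

lemma comm_bezout_mult:
  fixes A B C :: "'n::finite imat"
  assumes "comm_bezout A B" and "comm_bezout A C"
  shows "comm_bezout A (B ** C)"
proof -
  obtain X Y where AB: "A ** B = B ** A" and bez: "A ** X + B ** Y = mat 1"
    using assms(1) unfolding comm_bezout_def by blast
  obtain X' Y' where AC: "A ** C = C ** A" and bez': "A ** X' + C ** Y' = mat 1"
    using assms(2) unfolding comm_bezout_def by blast
  have "B = B ** (A ** X' + C ** Y')" by (simp add: bez')
  also have "\<dots> = A ** (B ** X') + (B ** C) ** Y'"
    by (simp add: matrix_add_ldistrib matrix_mul_assoc AB)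
  finally have "mat 1 = A ** X + (A ** (B ** X') + (B ** C) ** Y') ** Y"
    using bez by simp
  also have "\<dots> = A ** (X + B ** X' ** Y) + (B ** C) ** (Y' ** Y)"
    by (simp add: matrix_add_ldistrib matrix_add_rdistrib matrix_mul_assoc add.assoc)
  finally have "\<exists>X Y. A ** X + (B ** C) ** Y = mat 1" by metis
  moreover have "A ** (B ** C) = (B ** C) ** A"
    by (metis AB AC matrix_mul_assoc)
  ultimately show ?thesis by (simp add: comm_bezout_def)
qed

lemma mat_prod_list_Nil [simp]: "mat_prod_list [] = mat 1"
  by (simp add: mat_prod_list_def)

lemma mat_prod_list_Cons [simp]: "mat_prod_list (A # As) = A ** mat_prod_list As"
  by (simp add: mat_prod_list_def)

lemma nonsingular_mat_prod_list:
  "(\<And>A. A \<in> set As \<Longrightarrow> nonsingular A) \<Longrightarrow> nonsingular (mat_prod_list As)"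
  by (induction As) (auto simp: nonsingular_def det_mul)

lemma comm_bezout_mat_prod_list:
  "(\<And>B. B \<in> set Bs \<Longrightarrow> comm_bezout A B) \<Longrightarrow> comm_bezout A (mat_prod_list Bs)"
  by (induction Bs) (simp_all add: comm_bezout_mat_one comm_bezout_mult)

lemma mat_prod_list_map_factor:
  assumes "i \<in> set ns" and "\<And>k. k \<in> set ns \<Longrightarrow> G i ** G k = G k ** G i"
  shows "\<exists>Z. mat_prod_list (map G ns) = G i ** Z"
  using assms
proof (induction ns)
  case (Cons k ns)
  show ?case
  proof (cases "k = i")
    case False
    then obtain Z where "mat_prod_list (map G ns) = G i ** Z" using Cons by auto
    then have "mat_prod_list (map G (k # ns)) = G i ** (G k ** Z)"
      using Cons.prems(2)[of k] by (simp add: matrix_mul_assoc)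
    then show ?thesis ..
  qed auto
qed simp

lemma mat_prod_list_merge_head:
  assumes "1 \<le> L" and "N 1 = A ** G 1" and "\<And>i. 2 \<le> i \<Longrightarrow> N i = G i"
  shows "mat_prod_list (map N [1..<L+1]) = A ** mat_prod_list (map G [1..<L+1])"
proof -
  have "[1..<L+1] = 1 # [Suc 1..<L+1]" using assms(1) by (intro upt_conv_Cons) simp
  then have ns: "[1..<L+1] = 1 # [2..<L+1]" by (simp only: Suc_1)
  have tail: "map N [2..<L+1] = map G [2..<L+1]" by (rule map_cong) (auto simp: assms(3))
  show ?thesis
    unfolding ns list.map mat_prod_list_Cons assms(2) tail by (simp add: matrix_mul_assoc)
qed

lemma mat_lattice_mat_one: "mat_lattice (mat 1 :: 'n::finite imat) = UNIV"
  by (simp add: mat_lattice_unimodular unimodular_def)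

text \<open>With \<open>z = adj B x = det B \<cdot> B\<^sup>-\<^sup>1 x\<close>, both \<open>A z\<close> and \<open>B z\<close> are divisible by \<open>det B\<close>; a left
  Bezout identity \<open>P A + Q B = I\<close> then shows that \<open>z\<close> is divisible by \<open>det B\<close> too.\<close>
lemma mat_lattice_Int_subset:
  fixes A B :: "'n::finite imat"
  assumes "nonsingular A" and "nonsingular B" and "comm_bezout A B"
  shows "mat_lattice A \<inter> mat_lattice B \<subseteq> mat_lattice (A ** B)"
proof
  fix v assume "v \<in> mat_lattice A \<inter> mat_lattice B"
  then obtain x y where vx: "v = A *v x" and vy: "v = B *v y" by (metis IntE mat_lattice_iff)
  obtain X Y where comm: "A ** B = B ** A" and "A ** X + B ** Y = mat 1"
    using assms(3) by (auto simp: comm_bezout_def)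
  then obtain P Q where bez: "P ** A + Q ** B = mat 1"
    using left_bezout_if_right_bezout[OF assms(1)] by blast
  let ?d = "det B" and ?w = "P *v y + Q *v x"
  define z where "z = adjugate B *v x"
  have "A *v z = (adjugate B ** A) *v x"
    by (simp add: z_def matrix_vector_mul_assoc adjugate_commute[OF assms(2) comm])
  also have "\<dots> = (adjugate B ** B) *v y" by (metis matrix_vector_mul_assoc vx vy)
  also have "\<dots> = ?d *s y" by (simp add: mult_adjugate_left[OF assms(2)] scalar_mat_mult_vec)
  finally have Az: "A *v z = ?d *s y" .
  have Bz: "B *v z = ?d *s x"
    by (simp add: z_def matrix_vector_mul_assoc mult_adjugate_right[OF assms(2)]
        scalar_mat_mult_vec)
  have "z = (P ** A + Q ** B) *v z" by (simp add: bez)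
  also have "\<dots> = ?d *s ?w"
    by (simp add: matrix_vector_mult_add_rdistrib matrix_vector_mul_assoc[symmetric] Az Bz
        vector_scalar_commute_ring vector_add_ldistrib)
  finally have "z = ?d *s ?w" .
  then have "?d *s x = ?d *s (B *v ?w)" by (metis Bz vector_scalar_commute_ring)
  then have "x = B *v ?w" using assms(2) by (simp add: nonsingular_def vec_eq_iff)
  then have "v = (A ** B) *v ?w" by (metis vx matrix_vector_mul_assoc)
  then show "v \<in> mat_lattice (A ** B)" by simp
qed

lemma mat_lattice_INT_subset_mat_prod_list:
  assumes "distinct ns" and "\<And>i. i \<in> set ns \<Longrightarrow> nonsingular (N i)"
    and "pairwise (\<lambda>i j. comm_bezout (N i) (N j)) (set ns)"
  shows "(\<Inter>i\<in>set ns. mat_lattice (N i)) \<subseteq> mat_lattice (mat_prod_list (map N ns))"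
  using assms
proof (induction ns)
  case Nil
  then show ?case by (simp add: mat_lattice_mat_one)
next
  case (Cons a ns)
  let ?P = "mat_prod_list (map N ns)"
  have "comm_bezout (N a) ?P"
    using Cons.prems by (intro comm_bezout_mat_prod_list) (auto simp: pairwise_insert)
  moreover have "nonsingular ?P" using Cons.prems by (intro nonsingular_mat_prod_list) auto
  ultimately have "mat_lattice (N a) \<inter> mat_lattice ?P \<subseteq> mat_lattice (N a ** ?P)"
    using Cons.prems by (intro mat_lattice_Int_subset) auto
  moreover have "(\<Inter>i\<in>set ns. mat_lattice (N i)) \<subseteq> mat_lattice ?P"
    using Cons by (simp add: pairwise_insert)
  ultimately show ?case by auto
qed

lemma crt_combination_congruent:
  fixes N W V :: "nat \<Rightarrow> 'n::finite imat"
  assumes "finite I" and "j \<in> I"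
    and "\<And>i. i \<in> I \<Longrightarrow> i \<noteq> j \<Longrightarrow> mat_lattice (W i) \<subseteq> mat_lattice (N j)"
    and "W j ** V j + N j ** Q = mat 1" and "m - r j \<in> mat_lattice (N j)"
  shows "(\<Sum>i\<in>I. (W i ** V i) *v r i) - m \<in> mat_lattice (N j)"
proof -
  have "(W j ** V j) *v r j = r j - N j *v (Q *v r j)"
    using assms(4) by (metis add_diff_cancel_right' matrix_vector_mul_assoc
        matrix_vector_mul_lid matrix_vector_mult_diff_rdistrib)
  moreover have "(W i ** V i) *v r i \<in> mat_lattice (N j)" if "i \<in> I - {j}" for i
  proof -
    have "(W i ** V i) *v r i \<in> mat_lattice (W i)" by (simp flip: matrix_vector_mul_assoc)
    then show ?thesis using assms(3) that by blast
  qed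
  then have rest: "(\<Sum>i\<in>I - {j}. (W i ** V i) *v r i) \<in> mat_lattice (N j)"
    by (rule mat_lattice_sum)
  ultimately have "(\<Sum>i\<in>I. (W i ** V i) *v r i) - m
      = (\<Sum>i\<in>I - {j}. (W i ** V i) *v r i) - (m - r j) - N j *v (Q *v r j)"
    using assms(1,2) by (simp add: sum.remove algebra_simps)
  also have "\<dots> \<in> mat_lattice (N j)"
    by (rule mat_lattice_diff[OF mat_lattice_diff[OF rest assms(5)] mult_vec_in_mat_lattice])
  finally show ?thesis .
qed

locale comm_bezout_family =
  fixes N :: "nat \<Rightarrow> 'n::finite imat" and ns :: "nat list"
  assumes distinct_ns: "distinct ns"
    and nonsingular_N: "i \<in> set ns \<Longrightarrow> nonsingular (N i)"
    and pairwise_comm_bezout: "pairwise (\<lambda>i j. comm_bezout (N i) (N j)) (set ns)"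
begin

abbreviation cofactor :: "nat \<Rightarrow> 'n imat" where
  "cofactor i \<equiv> mat_prod_list (map N (filter (\<lambda>j. j \<noteq> i) ns))"

lemma nonsingular_prod: "nonsingular (mat_prod_list (map N ns))"
  using nonsingular_N by (intro nonsingular_mat_prod_list) auto

lemma mat_lattice_INT_subset_prod:
  "(\<Inter>i\<in>set ns. mat_lattice (N i)) \<subseteq> mat_lattice (mat_prod_list (map N ns))"
  using distinct_ns nonsingular_N pairwise_comm_bezout
  by (rule mat_lattice_INT_subset_mat_prod_list)

lemma ex_cofactor_bezout:
  assumes "i \<in> set ns"
  shows "\<exists>X Q. cofactor i ** X + N i ** Q = mat 1"
proof -
  have "comm_bezout (N i) (cofactor i)"
    using assms pairwise_comm_bezout by (intro comm_bezout_mat_prod_list) (auto simp: pairwise_def)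
  then have "comm_bezout (cofactor i) (N i)" by (rule comm_bezout_sym)
  then show ?thesis by (auto simp: comm_bezout_def)
qed

lemma mat_lattice_cofactor_subset:
  assumes "i \<in> set ns" and "j \<in> set ns" and "i \<noteq> j"
  shows "mat_lattice (cofactor i) \<subseteq> mat_lattice (N j)"
proof -
  have "N j ** N k = N k ** N j" if "k \<in> set (filter (\<lambda>k. k \<noteq> i) ns)" for k
    using that assms(2) pairwise_comm_bezout
    by (cases "k = j") (auto simp: pairwise_def comm_bezout_def)
  then have "\<exists>Z. cofactor i = N j ** Z"
    using assms by (intro mat_prod_list_map_factor) auto
  then show ?thesis by (simp add: mat_lattice_subset_iff)
qed

lemma ex_crt_coefficients:
  "\<exists>V. \<forall>i\<in>set ns. (\<not> unimodular (N i) \<longrightarrow> (\<exists>Q. cofactor i ** V i + N i ** Q = mat 1)) \<and>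
     (unimodular (N i) \<longrightarrow> V i = 0)"
proof (intro bchoice ballI)
  fix i assume i: "i \<in> set ns"
  show "\<exists>X. (\<not> unimodular (N i) \<longrightarrow> (\<exists>Q. cofactor i ** X + N i ** Q = mat 1)) \<and>
      (unimodular (N i) \<longrightarrow> X = 0)"
  proof (cases "unimodular (N i)")
    case False
    then show ?thesis using ex_cofactor_bezout[OF i] by blast
  qed simp
qed

theorem crt_combination_mem_mat_lattice_prod:
  assumes "\<And>i. i \<in> set ns \<Longrightarrow> unimodular (N i) \<or> (\<exists>Q. cofactor i ** V i + N i ** Q = mat 1)"
    and "\<And>i. i \<in> set ns \<Longrightarrow> m - r i \<in> mat_lattice (N i)"
  shows "(\<Sum>i\<in>set ns. (cofactor i ** V i) *v r i) - m \<in> mat_lattice (mat_prod_list (map N ns))"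
proof -
  have "(\<Sum>i\<in>set ns. (cofactor i ** V i) *v r i) - m \<in> mat_lattice (N j)" if "j \<in> set ns" for j
    using assms(1)[OF that]
  proof
    assume "unimodular (N j)"
    then show ?thesis by (simp add: mat_lattice_unimodular)
  next
    assume "\<exists>Q. cofactor j ** V j + N j ** Q = mat 1"
    then show ?thesis
      using that assms(2)[OF that] mat_lattice_cofactor_subset
      by (elim exE, intro crt_combination_congruent) auto
  qed
  then show ?thesis using mat_lattice_INT_subset_prod by blast
qed

end

lemma pairwise_comm_bezout_merge:
  fixes F N :: "nat \<Rightarrow> 'n::finite imat"
  assumes pairs: "pairwise (\<lambda>j k. comm_bezout (F j) (F k)) {0..L}"
    and N1: "N 1 = F 0 ** F 1" and N: "\<And>i. 2 \<le> i \<Longrightarrow> N i = F i"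
  shows "pairwise (\<lambda>i j. comm_bezout (N i) (N j)) {1..L}"
proof -
  have F: "comm_bezout (F j) (F k)" if "j \<le> L" "k \<le> L" "j \<noteq> k" for j k
    using pairs that by (simp add: pairwise_def)
  have key: "comm_bezout (N i) (N j)" if "i \<in> {1..L}" "j \<in> {2..L}" "i \<noteq> j" for i j
  proof (cases "i = 1")
    case True
    have "comm_bezout (F 0 ** F 1) (F j)"
      by (rule comm_bezout_sym[OF comm_bezout_mult]) (use that F in auto)
    then show ?thesis using that N[of j] unfolding True N1 by simp
  qed (use that F N in auto)
  show ?thesis
    unfolding pairwise_def
  proof (intro ballI impI)
    fix i j assume ij: "i \<in> {1..L}" "j \<in> {1..L}" "i \<noteq> j"
    show "comm_bezout (N i) (N j)"
    proof (cases "j = 1")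
      case True
      then have "comm_bezout (N j) (N i)" using key[of j i] ij by auto
      then show ?thesis by (rule comm_bezout_sym)
    qed (use key ij in auto)
  qed
qed

lemma comm_bezout_family_merge:
  fixes F N :: "nat \<Rightarrow> 'n::finite imat"
  assumes "1 \<le> L" and nonsingular_F: "\<And>j. j \<le> L \<Longrightarrow> nonsingular (F j)"
    and pairs: "pairwise (\<lambda>j k. comm_bezout (F j) (F k)) {0..L}"
    and N1: "N 1 = F 0 ** F 1" and N: "\<And>i. 2 \<le> i \<Longrightarrow> N i = F i"
  shows "comm_bezout_family N [1..<L+1]"
proof
  have set_ns: "set [1..<L+1] = {1..L}" by auto
  show "pairwise (\<lambda>i j. comm_bezout (N i) (N j)) (set [1..<L+1])"
    unfolding set_ns using pairs N1 N by (rule pairwise_comm_bezout_merge)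
  fix i assume "i \<in> set [1..<L+1]"
  then have i: "1 \<le> i" "i \<le> L" by auto
  show "nonsingular (N i)"
  proof (cases "i = 1")
    case True
    show ?thesis
      using nonsingular_F[of 0] nonsingular_F[of 1] assms(1)
      unfolding True N1 by (simp add: nonsingular_def det_mul)
  qed (use i nonsingular_F N in auto)
qed (simp add: distinct_upt)

section \<open>The Chinese remainder theorem for integer matrices\<close>

lemma is_lcrm_if_mat_lattice_INT_subset:
  assumes "nonsingular R" and "\<forall>i\<in>{1..L}. \<exists>P. R = Ms i ** P"
    and "(\<Inter>i\<in>{1..L}. mat_lattice (Ms i)) \<subseteq> mat_lattice R"
  shows "is_lcrm Ms L R"
  unfolding is_lcrm_def
proof (intro conjI assms(1,2) allI impI)
  fix R' assume "nonsingular R' \<and> (\<forall>i\<in>{1..L}. \<exists>P. R' = Ms i ** P)"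
  then have "mat_lattice R' \<subseteq> (\<Inter>i\<in>{1..L}. mat_lattice (Ms i))"
    by (auto simp: mat_lattice_subset_iff[symmetric])
  then show "\<exists>A. R' = R ** A" using assms(3) by (simp add: mat_lattice_subset_iff[symmetric])
qed

locale crt_moduli = comm_bezout_family N ns for N :: "nat \<Rightarrow> 'n::finite imat" and ns +
  fixes Ms :: "nat \<Rightarrow> 'n imat" and R :: "'n imat"
  assumes nonsingular_R: "nonsingular R"
    and mat_lattice_R: "mat_lattice R = mat_lattice (mat_prod_list (map N ns))"
    and nonsingular_Ms: "i \<in> set ns \<Longrightarrow> nonsingular (Ms i)"
    and mat_lattice_Ms: "i \<in> set ns \<Longrightarrow> mat_lattice (Ms i) \<subseteq> mat_lattice (N i)"
    and multiple_R: "i \<in> set ns \<Longrightarrow> \<exists>P. R = Ms i ** P"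
begin

lemma mat_lattice_INT_Ms_subset: "(\<Inter>i\<in>set ns. mat_lattice (Ms i)) \<subseteq> mat_lattice R"
proof -
  have "(\<Inter>i\<in>set ns. mat_lattice (Ms i)) \<subseteq> (\<Inter>i\<in>set ns. mat_lattice (N i))"
    by (rule INT_anti_mono[OF order_refl mat_lattice_Ms])
  also have "\<dots> \<subseteq> mat_lattice R"
    unfolding mat_lattice_R by (rule mat_lattice_INT_subset_prod)
  finally show ?thesis .
qed

lemma is_lcrm_R:
  assumes "set ns = {1..L}"
  shows "is_lcrm Ms L R"
proof (rule is_lcrm_if_mat_lattice_INT_subset[OF nonsingular_R])
  show "\<forall>i\<in>{1..L}. \<exists>P. R = Ms i ** P" using multiple_R unfolding assms by blast
  show "(\<Inter>i\<in>{1..L}. mat_lattice (Ms i)) \<subseteq> mat_lattice R"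
    using mat_lattice_INT_Ms_subset unfolding assms .
qed

theorem mat_rem_reconstruction:
  assumes "\<And>i. i \<in> set ns \<Longrightarrow> unimodular (N i) \<or> (\<exists>Q. cofactor i ** V i + N i ** Q = mat 1)"
    and "m \<in> fund_set R"
  shows "m = mat_rem (\<Sum>i\<in>set ns. (cofactor i ** V i) *v mat_rem m (Ms i)) R"
proof (rule mat_rem_eqI[OF nonsingular_R assms(2), symmetric])
  show "(\<Sum>i\<in>set ns. (cofactor i ** V i) *v mat_rem m (Ms i)) - m \<in> mat_lattice R"
    unfolding mat_lattice_R
  proof (rule crt_combination_mem_mat_lattice_prod)
    fix i assume i: "i \<in> set ns"
    show "unimodular (N i) \<or> (\<exists>Q. cofactor i ** V i + N i ** Q = mat 1)" by (rule assms(1)[OF i])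
    show "m - mat_rem m (Ms i) \<in> mat_lattice (N i)"
      by (rule subsetD[OF mat_lattice_Ms[OF i] mat_rem_spec(2)[OF nonsingular_Ms[OF i]]])
  qed
qed

lemma mat_rem_inject:
  assumes "m \<in> fund_set R" and "m' \<in> fund_set R"
    and "\<And>i. i \<in> set ns \<Longrightarrow> mat_rem m (Ms i) = mat_rem m' (Ms i)"
  shows "m = m'"
proof -
  obtain V where V0: "\<forall>i\<in>set ns. (\<not> unimodular (N i) \<longrightarrow> (\<exists>Q. cofactor i ** V i + N i ** Q = mat 1)) \<and>
      (unimodular (N i) \<longrightarrow> V i = 0)"
    using ex_crt_coefficients by blast
  have V: "unimodular (N i) \<or> (\<exists>Q. cofactor i ** V i + N i ** Q = mat 1)" if "i \<in> set ns" for i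
    using V0 that by auto
  have "(\<Sum>i\<in>set ns. (cofactor i ** V i) *v mat_rem m (Ms i)) =
      (\<Sum>i\<in>set ns. (cofactor i ** V i) *v mat_rem m' (Ms i))"
    using assms(3) by (intro sum.cong) auto
  then show ?thesis
    using mat_rem_reconstruction[OF V assms(1)] mat_rem_reconstruction[OF V assms(2)] by simp
qed

end

lemma crt_moduli_merged:
  fixes M U :: "'n::finite imat" and Gam :: "nat \<Rightarrow> 'n imat"
  defines "F \<equiv> \<lambda>j. if j = 0 then M else Gam j"
  assumes "1 \<le> L"
    and "\<forall>j\<in>{0..L}. nonsingular (F j)"
    and "\<forall>j\<in>{0..L}. \<forall>k\<in>{0..L}. j \<noteq> k \<longrightarrow> F j ** F k = F k ** F j \<and> mat_coprime (F j) (F k)"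
    and "unimodular U"
  shows "crt_moduli (\<lambda>i. if i = 1 then M ** Gam 1 else Gam i) [1..<L+1] (\<lambda>i. M ** Gam i)
    (M ** mat_prod_list (map Gam [1..<L+1]) ** U)"
    (is "crt_moduli ?N _ _ ?R")
proof -
  have set_ns: "set [1..<L+1] = {1..L}" by auto
  have nonsingular_F: "det (F j) \<noteq> 0" if "j \<le> L" for j
    using assms(3) that by (simp add: nonsingular_def)
  have comm_F: "F j ** F k = F k ** F j" if "j \<le> L" "k \<le> L" for j k
    using assms(4) that by (cases "j = k") auto
  have "pairwise (\<lambda>j k. comm_bezout (F j) (F k)) {0..L}"
    using assms(3,4) by (auto simp: pairwise_def intro: comm_bezout_if_mat_coprime)
  then interpret comm_bezout_family ?N "[1..<L+1]"
    using assms(2,3) by (intro comm_bezout_family_merge[where F = F]) (auto simp: F_def)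
  have "mat_prod_list (map ?N [1..<L+1]) = M ** mat_prod_list (map Gam [1..<L+1])"
    by (rule mat_prod_list_merge_head[OF assms(2)]) simp_all
  then have R: "?R = mat_prod_list (map ?N [1..<L+1]) ** U" by (simp only:)
  show ?thesis
  proof
    show "nonsingular ?R"
      using nonsingular_prod unimodular_imp_nonsingular[OF assms(5)]
      unfolding R nonsingular_def det_mul by simp
    show "mat_lattice ?R = mat_lattice (mat_prod_list (map ?N [1..<L+1]))"
      by (simp only: R mat_lattice_mult_unimodular assms(5))
    fix i assume "i \<in> set [1..<L+1]"
    then have i: "i \<in> {1..L}" unfolding set_ns .
    show "nonsingular (M ** Gam i)"
      using nonsingular_F[of 0] nonsingular_F[of i] i by (simp add: F_def nonsingular_def det_mul)
    show "mat_lattice (M ** Gam i) \<subseteq> mat_lattice (?N i)"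
    proof (cases "i = 1")
      case False
      then have "M ** Gam i = ?N i ** M" using comm_F[of 0 i] i by (simp add: F_def)
      then show ?thesis by (simp add: mat_lattice_mult_subset)
    qed simp
    have "Gam i ** Gam k = Gam k ** Gam i" if "k \<in> set [1..<L+1]" for k
      using comm_F[of i k] i that unfolding set_ns by (simp add: F_def)
    then obtain Z where Z: "mat_prod_list (map Gam [1..<L+1]) = Gam i ** Z"
      using mat_prod_list_map_factor[of i "[1..<L+1]" Gam] i unfolding set_ns by blast
    have "?R = (M ** Gam i) ** (Z ** U)" by (simp only: Z matrix_mul_assoc)
    then show "\<exists>P. ?R = (M ** Gam i) ** P" ..
  qed
qed

theorem corollary2:
  fixes M U :: "'n::finite imat" and Gam :: "nat \<Rightarrow> 'n imat" and L :: nat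
  defines "F \<equiv> (\<lambda>j. if j = 0 then M else Gam j)"
  defines "Ms \<equiv> (\<lambda>i. M ** Gam i)"
  defines "N \<equiv> (\<lambda>i. if i = 1 then M ** Gam 1 else Gam i)"
  defines "W \<equiv> (\<lambda>i. mat_prod_list (map N (filter (\<lambda>j. j \<noteq> i) [1..<L+1])))"
  defines "R \<equiv> M ** mat_prod_list (map Gam [1..<L+1]) ** U"
  defines "admissible \<equiv> (\<lambda>What :: nat \<Rightarrow> 'n imat. \<forall>i\<in>{1..L}.
             (\<not> unimodular (N i) \<longrightarrow> (\<exists>Q. W i ** What i + N i ** Q = mat 1)) \<and>
             (unimodular (N i) \<longrightarrow> What i = 0))"
  assumes "L \<ge> 1"
    and "\<forall>j\<in>{0..L}. nonsingular (F j)"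
    and "\<forall>j\<in>{0..L}. \<forall>k\<in>{0..L}. j \<noteq> k \<longrightarrow> F j ** F k = F k ** F j \<and> mat_coprime (F j) (F k)"
    and "unimodular U"
  shows "is_lcrm Ms L R \<and>
         (\<exists>What. admissible What) \<and>
         (\<forall>What. admissible What \<longrightarrow>
            (\<forall>m\<in>fund_set R.
               m = mat_rem (\<Sum>i = 1..L. (W i ** What i) *v mat_rem m (Ms i)) R)) \<and>
         (\<forall>m\<in>fund_set R. \<forall>m'\<in>fund_set R.
            (\<forall>i\<in>{1..L}. mat_rem m (Ms i) = mat_rem m' (Ms i)) \<longrightarrow> m = m')"
proof -
  have set_ns: "set [1..<L+1] = {1..L}" by auto
  interpret crt_moduli N "[1..<L+1]" Ms R
    unfolding N_def Ms_def R_def using assms(7-10) unfolding F_def by (rule crt_moduli_merged)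
  have "\<exists>What. admissible What"
    using ex_crt_coefficients unfolding admissible_def W_def set_ns .
  moreover have "m = mat_rem (\<Sum>i = 1..L. (W i ** What i) *v mat_rem m (Ms i)) R"
    if "admissible What" and "m \<in> fund_set R" for What m
  proof -
    have "unimodular (N i) \<or> (\<exists>Q. W i ** What i + N i ** Q = mat 1)" if "i \<in> set [1..<L+1]" for i
      using \<open>admissible What\<close> that unfolding admissible_def set_ns by blast
    then show ?thesis
      using mat_rem_reconstruction that(2) unfolding W_def set_ns by blast
  qed
  moreover have "m = m'" if "m \<in> fund_set R" "m' \<in> fund_set R"
    "\<forall>i\<in>{1..L}. mat_rem m (Ms i) = mat_rem m' (Ms i)" for m m'
    using mat_rem_inject that unfolding set_ns by blast
  ultimately show ?thesis using is_lcrm_R[OF set_ns] by blast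
qed

end
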